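(* Let $K$ be a field of characteristic zero, let $(p_\lambda(x_1,x_2,\ldots))_{\lambda\in\mathcal P}$ be a full sequence of symmetric functions over $K$, and let $F^{y}$ be a shift-invariant $K$-linear operator from symmetric functions in $x_1,x_2,\ldots$ to symmetric functions in $x_1,x_2,\ldots$ with coefficients polynomial in $y$, such that for every partition $\lambda$ $$F^{y}p_\lambda(x_1,x_2,\ldots)=\sum_{\alpha}p_\alpha(x_1,x_2,\ldots)\,p_{\lambda-\alpha}(y,0,0,\ldots),$$ the sum ranging over all integer vectors $\alpha$ with finite support. Then there is a nonzero constant $c\in K$ with $F^{y}=cE^{y}$; in other words, $(\frac1c p_\lambda)_{\lambda\in\mathcal P}$ is a full divided power sequence of symmetric functions.
   Context: A partition $\lambda$ is an eventually zero weakly decreasing sequence $\lambda_1\ge\lambda_2\ge\cdots$ of natural numbers; $\mathcal P$ is the set of partitions and $\mathcal P_n$ those with sum $|\lambda|=n$. The conjugate $\lambda'$ is given by $\lambda'_i=|\{j:\lambda_j\ge i\}|$. Reverse lexicographic order: $\alpha\ll\beta$ iff there is $i$ with $\alpha_i<\beta_i$ and $\alpha_j=\beta_j$ for all $j>i$. $m_\mu$ denotes the monomial symmetric function. A full sequence $(p_\lambda)_{\lambda\in\mathcal P}$ consists of symmetric functions with $p_\lambda$ homogeneous of degree $|\lambda|$ and $p_\lambda=\sum_{\mu\in\mathcal P_{|\lambda|},\ \mu=\lambda'\text{ or }\lambda'\ll\mu}b_{\lambda\mu}m_\mu$ with the coefficient $b_{\lambda\lambda'}$ of $m_{\lambda'}$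 nonzero. For an integer vector $\alpha$ with finite support: if all $\alpha_i\ge0$, $p_\alpha:=p_\lambda$ where $\lambda$ is the partition obtained by sorting $\alpha$; if some $\alpha_i<0$, $p_\alpha:=0$. The symmetric shift is $E^{a}q(x_1,x_2,\ldots)=q(a,x_1,x_2,\ldots)$ (for a scalar $a$ or an indeterminate $y$). An operator $\theta$ is shift-invariant if $E^a\theta=\theta E^a$ for all $a\in K$. A full divided power sequence is a full sequence satisfying $E^yp_\lambda(x_1,x_2,\ldots)=\sum_\alpha p_\alpha(x_1,x_2,\ldots)p_{\lambda-\alpha}(y,0,0,\ldots)$ for all $\lambda$. *)

theory Defs
  imports Main
begin

text \<open>Exponent vectors / monomials: a function e :: nat \<Rightarrow> nat with finite support
  encodes the monomial x_1^(e 0) x_2^(e 1) ...  (0-based indexing).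
  A symmetric function is represented by its coefficient function on monomials.
  Partitions are weakly decreasing finitely supported nat \<Rightarrow> nat, with
  lambda i standing for lambda_(i+1).\<close>

definition deg :: "(nat \<Rightarrow> nat) \<Rightarrow> nat" where
  "deg e = sum e {i. e i \<noteq> 0}"

definition is_partition :: "(nat \<Rightarrow> nat) \<Rightarrow> bool" where
  "is_partition l \<longleftrightarrow> (\<forall>i j. i \<le> j \<longrightarrow> l j \<le> l i) \<and> finite {i. l i \<noteq> 0}"

definition psize :: "(nat \<Rightarrow> nat) \<Rightarrow> nat" where
  "psize l = sum l {i. l i \<noteq> 0}"

definition conj_part :: "(nat \<Rightarrow> nat) \<Rightarrow> (nat \<Rightarrow> nat)" where
  "conj_part l = (\<lambda>i. card {j. Suc i \<le> l j})"

definition revlex :: "(nat \<Rightarrow> nat) \<Rightarrow> (nat \<Rightarrow> nat) \<Rightarrow> bool" where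
  "revlex a b \<longleftrightarrow> (\<exists>i. a i < b i \<and> (\<forall>j>i. a j = b j))"

definition symfun :: "((nat \<Rightarrow> nat) \<Rightarrow> 'k::field) \<Rightarrow> bool" where
  "symfun q \<longleftrightarrow> (\<forall>e. infinite {i. e i \<noteq> 0} \<longrightarrow> q e = 0)
     \<and> (\<forall>e \<sigma>. bij \<sigma> \<longrightarrow> q (e \<circ> \<sigma>) = q e)
     \<and> (\<exists>d. \<forall>e. q e \<noteq> 0 \<longrightarrow> deg e \<le> d)"

text \<open>Symmetric functions in x with coefficients polynomial in y:
  G k e is the coefficient of y^k x^e.\<close>
definition polysym :: "(nat \<Rightarrow> (nat \<Rightarrow> nat) \<Rightarrow> 'k::field) \<Rightarrow> bool" where
  "polysym G \<longleftrightarrow> (\<forall>k. symfun (G k)) \<and> finite {k. G k \<noteq> (\<lambda>_. 0)}"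

definition sorts_to :: "(nat \<Rightarrow> nat) \<Rightarrow> (nat \<Rightarrow> nat) \<Rightarrow> bool" where
  "sorts_to e l \<longleftrightarrow> is_partition l \<and> (\<exists>\<sigma>. bij \<sigma> \<and> e \<circ> \<sigma> = l)"

definition msym :: "(nat \<Rightarrow> nat) \<Rightarrow> (nat \<Rightarrow> nat) \<Rightarrow> 'k::field" where
  "msym mu e = (if sorts_to e mu then 1 else 0)"

definition full_seq :: "((nat \<Rightarrow> nat) \<Rightarrow> (nat \<Rightarrow> nat) \<Rightarrow> 'k::field) \<Rightarrow> bool" where
  "full_seq p \<longleftrightarrow> (\<forall>l. is_partition l \<longrightarrow>
     (\<exists>b. b (conj_part l) \<noteq> 0 \<and>
        p l = (\<lambda>e. \<Sum>mu \<in> {mu. is_partition mu \<and> psize mu = psize l \<and>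
                               (mu = conj_part l \<or> revlex (conj_part l) mu)}.
                     b mu * msym mu e)))"

definition pvec :: "((nat \<Rightarrow> nat) \<Rightarrow> (nat \<Rightarrow> nat) \<Rightarrow> 'k::field) \<Rightarrow> (nat \<Rightarrow> int) \<Rightarrow> (nat \<Rightarrow> nat) \<Rightarrow> 'k" where
  "pvec p a = (if (\<forall>i. 0 \<le> a i) then p (THE l. sorts_to (nat \<circ> a) l) else (\<lambda>_. 0))"

text \<open>Symmetric shift by an indeterminate y: (E^y q) k e = coefficient of
  y^k x^e in q(y,x_1,x_2,...).\<close>
definition Ey :: "((nat \<Rightarrow> nat) \<Rightarrow> 'k::field) \<Rightarrow> nat \<Rightarrow> (nat \<Rightarrow> nat) \<Rightarrow> 'k" where
  "Ey q = (\<lambda>k e. q (case_nat k e))"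

text \<open>Symmetric shift by a scalar a: q(a,x_1,x_2,...).\<close>
definition Ea :: "'k::field \<Rightarrow> ((nat \<Rightarrow> nat) \<Rightarrow> 'k) \<Rightarrow> (nat \<Rightarrow> nat) \<Rightarrow> 'k" where
  "Ea a q = (\<lambda>e. \<Sum>k | q (case_nat k e) \<noteq> 0. a ^ k * q (case_nat k e))"

text \<open>Evaluation q(y,0,0,...), as polynomial in y (coefficient list by k).\<close>
definition evaly :: "((nat \<Rightarrow> nat) \<Rightarrow> 'k::field) \<Rightarrow> nat \<Rightarrow> 'k" where
  "evaly q = (\<lambda>k. q (case_nat k (\<lambda>_. 0)))"

text \<open>The integer vectors alpha for which both alpha and lambda - alpha are
  nonnegative; all other summands vanish by the convention p_alpha = 0.\<close>
definition sub_vecs :: "(nat \<Rightarrow> nat) \<Rightarrow> (nat \<Rightarrow> int) set" where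
  "sub_vecs l = {a. \<forall>i. 0 \<le> a i \<and> a i \<le> int (l i)}"

text \<open>Right-hand side  sum_alpha p_alpha(x) p_(lambda-alpha)(y,0,0,...).\<close>
definition dp_rhs :: "((nat \<Rightarrow> nat) \<Rightarrow> (nat \<Rightarrow> nat) \<Rightarrow> 'k::field) \<Rightarrow> (nat \<Rightarrow> nat) \<Rightarrow> nat \<Rightarrow> (nat \<Rightarrow> nat) \<Rightarrow> 'k" where
  "dp_rhs p l = (\<lambda>k e. \<Sum>a \<in> sub_vecs l.
       pvec p a e * evaly (pvec p (\<lambda>i. int (l i) - a i)) k)"

definition full_dps :: "((nat \<Rightarrow> nat) \<Rightarrow> (nat \<Rightarrow> nat) \<Rightarrow> 'k::field) \<Rightarrow> bool" where
  "full_dps p \<longleftrightarrow> full_seq p \<and> (\<forall>l. is_partition l \<longrightarrow> Ey (p l) = dp_rhs p l)"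

end

theory Submission
  imports Defs "HOL-Computational_Algebra.Polynomial" "HOL-Combinatorics.Permutations"
begin

text \<open>
  Evaluating the hypothesis at x = 0 kills every summand except alpha = 0, so
  F p_lambda (y,0,0,...) = c p_lambda (y,0,0,...), where c is the constant p of the empty partition,
  nonzero because the sequence is full. The p_lambda are triangular in the monomial basis
  (the revlex-least monomial m_lambda' occurs with nonzero coefficient), so downward induction
  along the reverse lexicographic order transfers this identity to every m_mu, and linearity to
  every symmetric function. Finally, as K is infinite, F E^a = E^a F for all scalars a forces F
  to commute with the shift E^y by an indeterminate, i.e. with taking the coefficient of a power
  of x_1; induction on the number of variables then extends F r = c E^y r from x = 0 to all x.
\<close>

abbreviation zero_vec :: "nat \<Rightarrow> nat" where
  "zero_vec \<equiv> \<lambda>_. 0"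

subsection \<open>Finitely supported exponent vectors\<close>

lemma deg_eq_sum:
  assumes "finite S" "{i. e i \<noteq> 0} \<subseteq> S"
  shows "deg e = sum e S"
  unfolding deg_def using assms by (intro sum.mono_neutral_left) auto

lemma psize_eq_deg: "psize = deg"
  by (simp add: fun_eq_iff psize_def deg_def)

lemma finite_support_case_nat:
  "finite {i. case_nat j e i \<noteq> 0} \<longleftrightarrow> finite {i. e i \<noteq> (0::nat)}"
proof -
  have "{i. case_nat j e i \<noteq> 0} \<subseteq> insert 0 (Suc ` {i. e i \<noteq> 0})"
    by (auto split: nat.split_asm)
  moreover have "{i. e i \<noteq> 0} = Suc -` {i. case_nat j e i \<noteq> 0}"
    by auto
  ultimately show ?thesis
    by (metis finite_subset finite_insert finite_imageI finite_vimageI inj_Suc)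
qed

lemma finite_support_bounded:
  fixes e :: "nat \<Rightarrow> 'a::zero"
  assumes "finite {i. e i \<noteq> 0}"
  obtains N where "\<And>i. N \<le> i \<Longrightarrow> e i = 0"
proof -
  obtain N where N: "\<forall>i \<in> {i. e i \<noteq> 0}. i < N"
    using assms finite_nat_set_iff_bounded by blast
  have "e i = 0" if "N \<le> i" for i
    using N that by (auto simp: not_less[symmetric])
  then show ?thesis
    by (rule that)
qed

lemma deg_case_nat:
  assumes "finite {i. e i \<noteq> 0}"
  shows "deg (case_nat j e) = j + deg e"
proof -
  let ?S = "{i. e i \<noteq> 0}"
  have "deg (case_nat j e) = sum (case_nat j e) (insert 0 (Suc ` ?S))"
    using assms by (intro deg_eq_sum) (auto split: nat.split_asm)
  also have "\<dots> = j + sum e ?S"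
    using assms by (simp add: sum.reindex)
  finally show ?thesis
    by (simp add: deg_def)
qed

lemma bij_betw_Collect_comp:
  assumes "bij \<sigma>"
  shows "bij_betw \<sigma> {i. P (\<sigma> i)} {i. P i}"
proof -
  have "{i. P (\<sigma> i)} = \<sigma> -` {i. P i}"
    by auto
  then show ?thesis
    using assms unfolding bij_betw_def
    by (metis inj_on_subset subset_UNIV surj_image_vimage_eq)
qed

lemma finite_support_comp_bij:
  fixes e :: "nat \<Rightarrow> nat"
  assumes "bij \<sigma>"
  shows "finite {i. (e \<circ> \<sigma>) i \<noteq> 0} \<longleftrightarrow> finite {i. e i \<noteq> 0}"
  using bij_betw_finite[OF bij_betw_Collect_comp[OF assms]] by simp

lemma deg_comp_bij:
  assumes "bij \<sigma>"
  shows "deg (e \<circ> \<sigma>) = deg e"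
  unfolding deg_def using sum.reindex_bij_betw[OF bij_betw_Collect_comp[OF assms], of e] by simp

lemma bij_case_nat_Suc:
  assumes "bij \<sigma>"
  shows "bij (case_nat 0 (\<lambda>n. Suc (\<sigma> n)))"
proof (rule o_bij)
  show "case_nat 0 (\<lambda>n. Suc (inv \<sigma> n)) \<circ> case_nat 0 (\<lambda>n. Suc (\<sigma> n)) = id"
    using bij_is_inj[OF assms] by (auto simp: fun_eq_iff split: nat.split)
  show "case_nat 0 (\<lambda>n. Suc (\<sigma> n)) \<circ> case_nat 0 (\<lambda>n. Suc (inv \<sigma> n)) = id"
    using bij_is_surj[OF assms] by (auto simp: fun_eq_iff surj_f_inv_f split: nat.split)
qed

lemma case_nat_comp_case_nat_Suc:
  "case_nat j e \<circ> case_nat 0 (\<lambda>n. Suc (\<sigma> n)) = case_nat j (e \<circ> \<sigma>)"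
  by (simp add: fun_eq_iff split: nat.split)

subsection \<open>Partitions and their conjugates\<close>

lemma partition_le_psize:
  assumes "is_partition l"
  shows "l i \<le> psize l"
proof (cases "l i = 0")
  case False
  then show ?thesis
    using assms unfolding is_partition_def psize_def by (intro member_le_sum) auto
qed simp

lemma partition_eq_0_if_psize_le:
  assumes "is_partition l" "psize l \<le> i"
  shows "l i = 0"
proof (rule ccontr)
  assume "l i \<noteq> 0"
  moreover have "j \<le> i \<Longrightarrow> l i \<le> l j" for j
    using assms(1) by (simp add: is_partition_def)
  ultimately have "{..i} \<subseteq> {j. l j \<noteq> 0}"
    by fastforce
  then have "(\<Sum>j\<le>i. 1) \<le> psize l"
    using assms(1) unfolding is_partition_def psize_def
    by (intro order.trans[OF sum_mono sum_mono2]) auto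
  then show False
    using assms(2) by simp
qed

lemma finite_partitions_psize_le: "finite {l. is_partition l \<and> psize l \<le> d}"
  by (rule finite_subset[OF _ finite_set_of_finite_funs[of "{..<d}" "{..d}" 0]])
    (auto intro: order.trans[OF partition_le_psize] partition_eq_0_if_psize_le)

lemma partition_psize_eq_0: "is_partition l \<Longrightarrow> psize l = 0 \<Longrightarrow> l = zero_vec"
  using partition_eq_0_if_psize_le by auto

lemma partition_zero_vec: "is_partition zero_vec"
  unfolding is_partition_def by simp

lemma finite_down_closed_eq_lessThan:
  assumes "finite S" "\<And>x y. y \<le> x \<Longrightarrow> x \<in> S \<Longrightarrow> y \<in> S"
  shows "S = {..<card S}"
proof (cases "S = {}")
  case False
  then have "S = {..Max S}"
    using assms Max_in Max_ge by blast
  then show ?thesis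
    by (metis card_lessThan lessThan_Suc_atMost)
qed simp

lemma conj_part_gt_iff:
  assumes "is_partition l"
  shows "j < conj_part l i \<longleftrightarrow> i < l j"
proof -
  have "finite {j. Suc i \<le> l j}"
    using assms unfolding is_partition_def by (auto elim: finite_subset[rotated])
  moreover have "y \<le> x \<Longrightarrow> x \<in> {j. Suc i \<le> l j} \<Longrightarrow> y \<in> {j. Suc i \<le> l j}" for x y
    using assms unfolding is_partition_def by (auto intro: order.trans)
  ultimately have "{j. Suc i \<le> l j} = {..<conj_part l i}"
    unfolding conj_part_def by (rule finite_down_closed_eq_lessThan)
  then show ?thesis
    by (metis Suc_le_eq lessThan_iff mem_Collect_eq)
qed

lemma conj_part_conj_part:
  assumes "is_partition l"
  shows "conj_part (conj_part l) = l"
proof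
  fix j
  have "{i. Suc j \<le> conj_part l i} = {..<l j}"
    using conj_part_gt_iff[OF assms] by (auto simp: Suc_le_eq)
  then show "conj_part (conj_part l) j = l j"
    by (simp add: conj_part_def[of "conj_part l"])
qed

lemma conj_part_eq_0: "is_partition l \<Longrightarrow> l 0 \<le> i \<Longrightarrow> conj_part l i = 0"
  by (metis conj_part_gt_iff gr_zeroI leD)

lemma partition_conj_part:
  assumes "is_partition l"
  shows "is_partition (conj_part l)"
  unfolding is_partition_def
proof (intro conjI allI impI)
  fix i j :: nat
  assume "i \<le> j"
  show "conj_part l j \<le> conj_part l i"
  proof (rule ccontr)
    assume "\<not> conj_part l j \<le> conj_part l i"
    then have "j < l (conj_part l i)"
      using conj_part_gt_iff[OF assms, of "conj_part l i" j] by simp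
    then have "conj_part l i < conj_part l i"
      using \<open>i \<le> j\<close> conj_part_gt_iff[OF assms, of "conj_part l i" i] by simp
    then show False
      by simp
  qed
next
  have "i < l 0" if "conj_part l i \<noteq> 0" for i
    using that conj_part_eq_0[OF assms, of i] by (cases "l 0 \<le> i") simp_all
  then have "{i. conj_part l i \<noteq> 0} \<subseteq> {..<l 0}"
    by blast
  then show "finite {i. conj_part l i \<noteq> 0}"
    by (rule finite_subset) simp
qed

lemma psize_conj_part:
  assumes "is_partition l"
  shows "psize (conj_part l) = psize l"
proof -
  define N M where "N = psize l" and "M = l 0"
  have l_le: "l i \<le> M" for i
    using assms unfolding M_def is_partition_def by blast
  have l_supp: "l i \<noteq> 0 \<Longrightarrow> i < N" for i
    using partition_eq_0_if_psize_le[OF assms, of i] unfolding N_def by (cases "psize l \<le> i") simp_all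
  have conj_supp: "conj_part l v \<noteq> 0 \<Longrightarrow> v < M" for v
    using conj_part_eq_0[OF assms, of v] unfolding M_def by (cases "l 0 \<le> v") simp_all
  \<comment> \<open>both sizes count the cells of the Young diagram, by rows and by columns\<close>
  have rows: "{(i, v). v < l i} = (SIGMA i:{..<N}. {..<l i})"
    using l_supp by fastforce
  have columns: "prod.swap ` {(i, v). v < l i} = (SIGMA v:{..<M}. {..<conj_part l v})"
    using l_le conj_part_gt_iff[OF assms] by (force simp: image_iff intro: less_le_trans)
  have "card (SIGMA i:{..<N}. {..<l i}) = card (SIGMA v:{..<M}. {..<conj_part l v})"
    unfolding rows[symmetric] columns[symmetric] by (simp add: card_image)
  then have "(\<Sum>i<N. l i) = (\<Sum>v<M. conj_part l v)"
    by simp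
  moreover have "psize l = (\<Sum>i<N. l i)"
    unfolding psize_eq_deg using l_supp by (intro deg_eq_sum) auto
  moreover have "psize (conj_part l) = (\<Sum>v<M. conj_part l v)"
    unfolding psize_eq_deg using conj_supp by (intro deg_eq_sum) auto
  ultimately show ?thesis
    by simp
qed

lemma conj_part_comp_bij:
  assumes "bij \<sigma>"
  shows "conj_part (e \<circ> \<sigma>) = conj_part e"
proof
  fix i
  show "conj_part (e \<circ> \<sigma>) i = conj_part e i"
    unfolding conj_part_def
    using bij_betw_same_card[OF bij_betw_Collect_comp[OF assms, of "\<lambda>j. Suc i \<le> e j"]] by simp
qed

subsection \<open>Sorting exponent vectors\<close>

lemma sorts_to_partition: "is_partition l \<Longrightarrow> sorts_to l l"
  unfolding sorts_to_def by (metis bij_id comp_id)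

lemma sorts_to_unique:
  assumes "sorts_to e l" "sorts_to e l'"
  shows "l = l'"
proof -
  obtain \<sigma> \<tau> where "bij \<sigma>" "e \<circ> \<sigma> = l" "bij \<tau>" "e \<circ> \<tau> = l'"
    using assms unfolding sorts_to_def by blast
  then have "conj_part l = conj_part l'"
    using conj_part_comp_bij by metis
  then show ?thesis
    using assms conj_part_conj_part unfolding sorts_to_def by metis
qed

lemma The_sorts_to: "sorts_to e l \<Longrightarrow> (THE l. sorts_to e l) = l"
  using sorts_to_unique by blast

lemma sorts_to_exists:
  assumes "finite {i. e i \<noteq> 0}"
  obtains l where "sorts_to e l"
proof -
  obtain N where N: "\<And>i. N \<le> i \<Longrightarrow> e i = 0"
    using finite_support_bounded[OF assms] by blast
  define xs where "xs = map e [0..<N]"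
  define ys where "ys = rev (sort xs)"
  have "mset ys = mset xs"
    by (simp add: ys_def)
  then obtain \<pi> where "\<pi> permutes {..<length xs}" and \<pi>_ys: "permute_list \<pi> xs = ys"
    by (rule mset_eq_permutation)
  then have \<pi>: "\<pi> permutes {..<N}"
    by (simp add: xs_def)
  define l where "l i = (if i < N then ys ! i else 0)" for i
  have "e \<circ> \<pi> = l"
  proof
    fix i
    show "(e \<circ> \<pi>) i = l i"
    proof (cases "i < N")
      case True
      then have "\<pi> i < N"
        using permutes_in_image[OF \<pi>] by simp
      moreover have "ys ! i = xs ! \<pi> i"
        using True \<pi> \<pi>_ys permute_list_nth[of \<pi> xs i] by (simp add: xs_def)
      ultimately show ?thesis
        using True by (simp add: l_def xs_def)
    next
      case False
      then show ?thesis
        using N permutes_not_in[OF \<pi>, of i] by (simp add: l_def)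
    qed
  qed
  moreover have "is_partition l"
    unfolding is_partition_def
  proof
    have "sorted (rev ys)" and "length ys = N"
      by (simp_all add: ys_def xs_def)
    then show "\<forall>i j. i \<le> j \<longrightarrow> l j \<le> l i"
      using sorted_rev_nth_mono[of ys] by (simp add: l_def)
    have "{i. l i \<noteq> 0} \<subseteq> {..<N}"
      by (simp add: l_def subset_iff)
    then show "finite {i. l i \<noteq> 0}"
      by (rule finite_subset) simp
  qed
  ultimately show ?thesis
    using that permutes_bij[OF \<pi>] unfolding sorts_to_def by blast
qed

lemma sorts_to_comp_bij_iff:
  assumes "bij \<sigma>"
  shows "sorts_to (e \<circ> \<sigma>) l \<longleftrightarrow> sorts_to e l"
proof
  assume "sorts_to (e \<circ> \<sigma>) l"
  then show "sorts_to e l"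
    using assms bij_comp unfolding sorts_to_def by (metis comp_assoc)
next
  assume "sorts_to e l"
  moreover have "e = (e \<circ> \<sigma>) \<circ> inv \<sigma>"
    using bij_is_surj[OF assms] by (simp add: comp_assoc surj_iff)
  ultimately show "sorts_to (e \<circ> \<sigma>) l"
    using assms bij_comp bij_imp_bij_inv unfolding sorts_to_def by (metis comp_assoc)
qed

lemma sorts_to_finite_support: "sorts_to e l \<Longrightarrow> finite {i. e i \<noteq> 0}"
  unfolding sorts_to_def is_partition_def using finite_support_comp_bij by blast

lemma sorts_to_deg: "sorts_to e l \<Longrightarrow> deg e = psize l"
  unfolding sorts_to_def psize_eq_deg using deg_comp_bij by metis

lemma sorts_to_eq_zero_vec_iff: "sorts_to e l \<Longrightarrow> l = zero_vec \<longleftrightarrow> e = zero_vec"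
  unfolding sorts_to_def by (metis bij_is_surj comp_apply surj_f_inv_f)

subsection \<open>Symmetric functions\<close>

lemma symfun_zero: "symfun (\<lambda>e. 0)"
  unfolding symfun_def by auto

lemma symfun_add:
  assumes "symfun q" "symfun r"
  shows "symfun (\<lambda>e. q e + r e)"
proof -
  obtain d d' where "\<forall>e. q e \<noteq> 0 \<longrightarrow> deg e \<le> d" "\<forall>e. r e \<noteq> 0 \<longrightarrow> deg e \<le> d'"
    using assms unfolding symfun_def by blast
  then have "\<forall>e. q e + r e \<noteq> 0 \<longrightarrow> deg e \<le> max d d'"
    by (metis add.right_neutral max.coboundedI1 max.coboundedI2)
  then show ?thesis
    using assms unfolding symfun_def by auto
qed

lemma symfun_mult_left: "symfun q \<Longrightarrow> symfun (\<lambda>e. c * q e)"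
  unfolding symfun_def by auto

lemma symfun_sum:
  assumes "finite S" "\<And>i. i \<in> S \<Longrightarrow> symfun (g i)"
  shows "symfun (\<lambda>e. \<Sum>i\<in>S. w i * g i e)"
  using assms by (induction S rule: finite_induct) (simp_all add: symfun_zero symfun_add symfun_mult_left)

lemma symfun_msym: "symfun (msym l)"
  unfolding symfun_def msym_def
  using sorts_to_finite_support sorts_to_comp_bij_iff sorts_to_deg by (auto split: if_splits)

lemma msym_eq_indicator: "sorts_to e l \<Longrightarrow> msym l' e = (if l' = l then 1 else 0)"
  unfolding msym_def using sorts_to_unique by auto

lemma msym_at_zero_vec: "msym l zero_vec = (if l = zero_vec then 1 else 0)"
  by (rule msym_eq_indicator[OF sorts_to_partition[OF partition_zero_vec]])

lemma symfun_eq_sum_msym: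
  fixes r :: "(nat \<Rightarrow> nat) \<Rightarrow> 'a::field"
  assumes r: "symfun r" and d: "\<And>e. r e \<noteq> 0 \<Longrightarrow> deg e \<le> d"
  shows "r e = (\<Sum>l \<in> {l. is_partition l \<and> psize l \<le> d}. r l * msym l e)"
proof (cases "finite {i. e i \<noteq> 0}")
  case False
  then have "r e = 0" and "msym l e = (0::'a)" for l
    using r sorts_to_finite_support unfolding symfun_def msym_def by auto
  then show ?thesis
    by simp
next
  case True
  then obtain l where l: "sorts_to e l"
    using sorts_to_exists by blast
  then have "is_partition l" and "r e = r l"
    using r unfolding symfun_def sorts_to_def by metis+
  moreover have "r l = 0" if "\<not> psize l \<le> d"
    using d that by (fastforce simp: psize_eq_deg)
  moreover have "(\<Sum>l' \<in> {l. is_partition l \<and> psize l \<le> d}. r l' * msym l' e)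
      = (\<Sum>l' \<in> {l. is_partition l \<and> psize l \<le> d}. if l' = l then r l else 0)"
    by (rule sum.cong) (simp_all add: msym_eq_indicator[OF l])
  ultimately show ?thesis
    using finite_partitions_psize_le[of d] by (simp add: sum.delta')
qed

lemma Ey_commute:
  assumes "symfun q"
  shows "Ey (Ey q j) k = Ey (Ey q k) j"
proof
  fix e
  have "case_nat j (case_nat k e) \<circ> Transposition.transpose 0 1 = case_nat k (case_nat j e)"
    by (auto simp: fun_eq_iff transpose_def split: nat.split)
  then show "Ey (Ey q j) k e = Ey (Ey q k) j e"
    using assms bij_transpose unfolding symfun_def Ey_def by metis
qed

lemma symfun_Ey:
  assumes "symfun q"
  shows "symfun (Ey q j)"
  unfolding symfun_def
proof (intro conjI allI impI)
  fix e
  show "infinite {i. e i \<noteq> 0} \<Longrightarrow> Ey q j e = 0"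
    using assms finite_support_case_nat unfolding symfun_def Ey_def by blast
next
  fix e and \<sigma> :: "nat \<Rightarrow> nat"
  assume "bij \<sigma>"
  then show "Ey q j (e \<circ> \<sigma>) = Ey q j e"
    using assms bij_case_nat_Suc case_nat_comp_case_nat_Suc unfolding symfun_def Ey_def by metis
next
  obtain d where d: "\<forall>e. q e \<noteq> 0 \<longrightarrow> deg e \<le> d"
    using assms unfolding symfun_def by blast
  have "deg e \<le> d" if "Ey q j e \<noteq> 0" for e
    using that d assms deg_case_nat finite_support_case_nat unfolding symfun_def Ey_def
    by (metis le_add2 order_trans)
  then show "\<exists>d. \<forall>e. Ey q j e \<noteq> 0 \<longrightarrow> deg e \<le> d"
    by blast
qed

lemma Ea_eq_sum_Ey:
  assumes q: "symfun q" and d: "\<And>e. q e \<noteq> 0 \<Longrightarrow> deg e \<le> D"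
  shows "Ea a q e = (\<Sum>j\<le>D. a ^ j * Ey q j e)"
  unfolding Ea_def Ey_def
proof (rule sum.mono_neutral_left)
  show "{j. q (case_nat j e) \<noteq> 0} \<subseteq> {..D}"
  proof
    fix j
    assume "j \<in> {j. q (case_nat j e) \<noteq> 0}"
    then have "q (case_nat j e) \<noteq> 0"
      by simp
    moreover from this have "finite {i. e i \<noteq> 0}"
      using q finite_support_case_nat unfolding symfun_def by blast
    ultimately show "j \<in> {..D}"
      using d deg_case_nat by fastforce
  qed
qed auto

subsection \<open>Full sequences\<close>

definition revlex_above :: "(nat \<Rightarrow> nat) \<Rightarrow> (nat \<Rightarrow> nat) set" where
  "revlex_above l = {l'. is_partition l' \<and> psize l' = psize l \<and> revlex l l'}"

lemma revlex_irrefl: "\<not> revlex a a"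
  unfolding revlex_def by auto

lemma revlex_trans:
  assumes "revlex a b" "revlex b c"
  shows "revlex a c"
proof -
  obtain i j where "a i < b i" "\<forall>k>i. a k = b k" "b j < c j" "\<forall>k>j. b k = c k"
    using assms unfolding revlex_def by blast
  then show ?thesis
    unfolding revlex_def by (metis linorder_neqE_nat order.strict_trans)
qed

lemma finite_revlex_above: "finite (revlex_above l)"
  by (rule finite_subset[OF _ finite_partitions_psize_le[of "psize l"]]) (auto simp: revlex_above_def)

lemma revlex_above_psubset:
  assumes "l' \<in> revlex_above l"
  shows "revlex_above l' \<subset> revlex_above l"
proof -
  have "revlex_above l' \<subseteq> revlex_above l"
    using assms revlex_trans[of l l'] unfolding revlex_above_def by auto
  moreover have "l' \<notin> revlex_above l'"
    using revlex_irrefl unfolding revlex_above_def by blast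
  ultimately show ?thesis
    using assms by blast
qed

lemma full_seq_expansion:
  assumes "full_seq p" "is_partition l"
  obtains b where "b (conj_part l) \<noteq> 0"
    "p l = (\<lambda>e. \<Sum>l' \<in> insert (conj_part l) (revlex_above (conj_part l)). b l' * msym l' e)"
proof -
  let ?S = "{l'. is_partition l' \<and> psize l' = psize l \<and> (l' = conj_part l \<or> revlex (conj_part l) l')}"
  have S: "?S = insert (conj_part l) (revlex_above (conj_part l))"
    using partition_conj_part[OF assms(2)] psize_conj_part[OF assms(2)]
    by (auto simp: revlex_above_def)
  obtain b where b: "b (conj_part l) \<noteq> 0" and "p l = (\<lambda>e. \<Sum>l' \<in> ?S. b l' * msym l' e)"
    using assms unfolding full_seq_def by blast
  then have "p l = (\<lambda>e. \<Sum>l' \<in> insert (conj_part l) (revlex_above (conj_part l)). b l' * msym l' e)"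
    by (simp only: S)
  with b show ?thesis
    by (rule that)
qed

lemma symfun_full_seq:
  assumes "full_seq p" "is_partition l"
  shows "symfun (p l)"
proof -
  obtain b where "p l = (\<lambda>e. \<Sum>l' \<in> insert (conj_part l) (revlex_above (conj_part l)). b l' * msym l' e)"
    using full_seq_expansion[OF assms] by blast
  then show ?thesis
    by (simp add: symfun_sum finite_revlex_above symfun_msym)
qed

lemma full_seq_at_zero_vec:
  fixes p :: "(nat \<Rightarrow> nat) \<Rightarrow> (nat \<Rightarrow> nat) \<Rightarrow> 'a::field"
  assumes "full_seq p" "is_partition l" "l \<noteq> zero_vec"
  shows "p l zero_vec = 0"
proof -
  let ?S = "insert (conj_part l) (revlex_above (conj_part l))"
  obtain b where p: "p l = (\<lambda>e. \<Sum>l' \<in> ?S. b l' * msym l' e)"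
    using full_seq_expansion[OF assms(1,2)] by blast
  have "psize l \<noteq> 0"
    using assms(2,3) partition_psize_eq_0 by blast
  moreover have "psize l' = psize l" if "l' \<in> ?S" for l'
    using that psize_conj_part[OF assms(2)] by (auto simp: revlex_above_def)
  ultimately have "l' \<noteq> zero_vec" if "l' \<in> ?S" for l'
    using that by (metis psize_def sum.neutral)
  then have "msym l' zero_vec = (0::'a)" if "l' \<in> ?S" for l'
    using that by (simp add: msym_at_zero_vec)
  then show ?thesis
    by (simp add: p)
qed

lemma full_seq_zero_vec_at_zero_vec_neq_0:
  assumes "full_seq p"
  shows "p zero_vec zero_vec \<noteq> 0"
proof -
  have "conj_part zero_vec = zero_vec"
    by (simp add: conj_part_def)
  moreover have "revlex_above zero_vec = {}"
    using partition_psize_eq_0 revlex_irrefl by (fastforce simp: revlex_above_def psize_def)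
  moreover obtain b where "b (conj_part zero_vec) \<noteq> 0" and
    "p zero_vec = (\<lambda>e. \<Sum>l' \<in> insert (conj_part zero_vec) (revlex_above (conj_part zero_vec)).
        b l' * msym l' e)"
    using full_seq_expansion[OF assms partition_zero_vec] by blast
  ultimately show ?thesis
    by (simp add: msym_at_zero_vec)
qed

lemma finite_sub_vecs:
  assumes "is_partition l"
  shows "finite (sub_vecs l)"
proof (rule finite_subset[OF _ finite_set_of_finite_funs])
  let ?N = "psize l"
  show "sub_vecs l \<subseteq> {a. \<forall>i. (i \<in> {..<?N} \<longrightarrow> a i \<in> {0..int ?N})
      \<and> (i \<notin> {..<?N} \<longrightarrow> a i = 0)}"
  proof (intro subsetI CollectI allI conjI impI)
    fix a i
    assume a: "a \<in> sub_vecs l"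
    then show "a i \<in> {0..int ?N}"
      using partition_le_psize[OF assms, of i] by (auto simp: sub_vecs_def intro: order.trans)
    assume "i \<notin> {..<?N}"
    then show "a i = 0"
      using a partition_eq_0_if_psize_le[OF assms, of i] unfolding sub_vecs_def
      by (metis (mono_tags) mem_Collect_eq lessThan_iff not_le of_nat_0 order_antisym)
  qed
qed auto

lemma pvec_at_zero_vec:
  fixes p :: "(nat \<Rightarrow> nat) \<Rightarrow> (nat \<Rightarrow> nat) \<Rightarrow> 'a::field"
  assumes "full_seq p" "is_partition l" "a \<in> sub_vecs l" "a \<noteq> (\<lambda>_. 0)"
  shows "pvec p a zero_vec = 0"
proof -
  have a: "0 \<le> a i" "a i \<le> int (l i)" for i
    using assms(3) unfolding sub_vecs_def by auto
  have "l i \<noteq> 0" if "nat (a i) \<noteq> 0" for i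
    using that a(2)[of i] by linarith
  then have "{i. (nat \<circ> a) i \<noteq> 0} \<subseteq> {i. l i \<noteq> 0}"
    by auto
  then have "finite {i. (nat \<circ> a) i \<noteq> 0}"
    using assms(2) finite_subset unfolding is_partition_def by blast
  then obtain l' where l': "sorts_to (nat \<circ> a) l'"
    by (rule sorts_to_exists)
  obtain i where "a i \<noteq> 0"
    using assms(4) by auto
  then have "nat \<circ> a \<noteq> zero_vec"
    using a(1)[of i] by (auto simp: fun_eq_iff intro: exI[of _ i])
  then have "l' \<noteq> zero_vec" and "is_partition l'"
    using l' sorts_to_eq_zero_vec_iff unfolding sorts_to_def by blast+
  then have "p l' zero_vec = 0"
    using full_seq_at_zero_vec[OF assms(1)] by blast
  then show ?thesis
    using a(1) The_sorts_to[OF l'] unfolding pvec_def by simp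
qed

text \<open>At x = 0 only the summand alpha = 0 of the divided power identity survives.\<close>

lemma dp_rhs_at_zero_vec:
  assumes "full_seq p" "is_partition l"
  shows "dp_rhs p l k zero_vec = p zero_vec zero_vec * Ey (p l) k zero_vec"
proof -
  let ?t = "\<lambda>a. pvec p a zero_vec * evaly (pvec p (\<lambda>i. int (l i) - a i)) k"
  have zero: "(\<lambda>_. 0) \<in> sub_vecs l"
    by (simp add: sub_vecs_def)
  have "pvec p (\<lambda>_. 0) = p zero_vec"
    using The_sorts_to[OF sorts_to_partition[OF partition_zero_vec]] by (simp add: pvec_def o_def)
  moreover have "pvec p (\<lambda>i. int (l i)) = p l"
    using The_sorts_to[OF sorts_to_partition[OF assms(2)]] by (simp add: pvec_def o_def)
  ultimately have "?t (\<lambda>_. 0) = p zero_vec zero_vec * Ey (p l) k zero_vec"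
    by (simp add: evaly_def Ey_def)
  moreover have "(\<Sum>a \<in> sub_vecs l - {\<lambda>_. 0}. ?t a) = 0"
    using pvec_at_zero_vec[OF assms] by (intro sum.neutral) simp
  ultimately show ?thesis
    unfolding dp_rhs_def using sum.remove[OF finite_sub_vecs[OF assms(2)] zero, of ?t] by simp
qed

lemma full_dps_scaled:
  fixes p :: "(nat \<Rightarrow> nat) \<Rightarrow> (nat \<Rightarrow> nat) \<Rightarrow> 'k::field"
  assumes full: "full_seq p" and "c \<noteq> 0"
    and dp: "\<And>l. is_partition l \<Longrightarrow> dp_rhs p l = (\<lambda>k e. c * Ey (p l) k e)"
  shows "full_dps (\<lambda>l e. p l e / c)"
  unfolding full_dps_def
proof (intro conjI allI impI)
  show "full_seq (\<lambda>l e. p l e / c)"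
    unfolding full_seq_def
  proof (intro allI impI)
    fix l :: "nat \<Rightarrow> nat"
    assume "is_partition l"
    with full obtain b where "b (conj_part l) \<noteq> 0" and "p l = (\<lambda>e. \<Sum>mu \<in> {mu. is_partition mu
        \<and> psize mu = psize l \<and> (mu = conj_part l \<or> revlex (conj_part l) mu)}. b mu * msym mu e)"
      unfolding full_seq_def by blast
    then show "\<exists>b. b (conj_part l) \<noteq> 0 \<and> (\<lambda>e. p l e / c) = (\<lambda>e. \<Sum>mu \<in> {mu. is_partition mu
        \<and> psize mu = psize l \<and> (mu = conj_part l \<or> revlex (conj_part l) mu)}. b mu * msym mu e)"
      using \<open>c \<noteq> 0\<close> by (intro exI[of _ "\<lambda>mu. b mu / c"]) (simp add: sum_divide_distrib)
  qed
next
  fix l :: "nat \<Rightarrow> nat"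
  assume "is_partition l"
  have "pvec (\<lambda>l e. p l e / c) a = (\<lambda>e. pvec p a e / c)" for a
    unfolding pvec_def by auto
  then have "dp_rhs (\<lambda>l e. p l e / c) l = (\<lambda>k e. dp_rhs p l k e / (c * c))"
    unfolding dp_rhs_def evaly_def by (simp add: sum_divide_distrib)
  then show "Ey (\<lambda>e. p l e / c) = dp_rhs (\<lambda>l e. p l e / c) l"
    using dp[OF \<open>is_partition l\<close>] \<open>c \<noteq> 0\<close> by (simp add: Ey_def fun_eq_iff)
qed

subsection \<open>Shift-invariant operators\<close>

lemma coeff_eq_0_if_sum_powers_vanish:
  fixes c :: "nat \<Rightarrow> 'a::{idom,ring_char_0}"
  assumes "\<And>x. (\<Sum>i\<le>D. x ^ i * c i) = 0" "j \<le> D"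
  shows "c j = 0"
proof -
  define P where "P = (\<Sum>i\<le>D. monom (c i) i)"
  have "poly P x = 0" for x
    using assms(1) by (simp add: P_def poly_sum poly_monom mult.commute)
  then have "P = 0"
    using poly_all_0_iff_0 by blast
  moreover have "coeff P j = c j"
    using assms(2) by (simp add: P_def coeff_sum)
  ultimately show ?thesis
    by simp
qed

locale shift_invariant_operator =
  fixes F :: "((nat \<Rightarrow> nat) \<Rightarrow> 'k::field_char_0) \<Rightarrow> nat \<Rightarrow> (nat \<Rightarrow> nat) \<Rightarrow> 'k"
  assumes F_range: "\<And>q. symfun q \<Longrightarrow> polysym (F q)"
    and F_add: "\<And>q r. symfun q \<Longrightarrow> symfun r \<Longrightarrow> F (\<lambda>e. q e + r e) = (\<lambda>k e. F q k e + F r k e)"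
    and F_mult_left: "\<And>c q. symfun q \<Longrightarrow> F (\<lambda>e. c * q e) = (\<lambda>k e. c * F q k e)"
    and F_Ea: "\<And>a q. symfun q \<Longrightarrow> F (Ea a q) = (\<lambda>k. Ea a (F q k))"
begin

lemma symfun_F: "symfun q \<Longrightarrow> symfun (F q k)"
  using F_range unfolding polysym_def by blast

lemma F_sum:
  assumes "finite S" "\<And>i. i \<in> S \<Longrightarrow> symfun (g i)"
  shows "F (\<lambda>e. \<Sum>i\<in>S. w i * g i e) = (\<lambda>k e. \<Sum>i\<in>S. w i * F (g i) k e)"
  using assms
proof (induction S rule: finite_induct)
  case empty
  show ?case
    using F_mult_left[OF symfun_zero, of 0] by simp
next
  case (insert x S)
  then show ?case
    using F_add[OF symfun_mult_left symfun_sum[OF insert.hyps(1)]] F_mult_left by simp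
qed

text \<open>Comparing coefficients of a^i in F E^a = E^a F, for infinitely many scalars a.\<close>

lemma F_Ey:
  assumes q: "symfun q"
  shows "F (Ey q j) k = Ey (F q k) j"
proof
  fix e
  obtain d d' where d: "\<And>e. q e \<noteq> 0 \<Longrightarrow> deg e \<le> d" and d': "\<And>e. F q k e \<noteq> 0 \<Longrightarrow> deg e \<le> d'"
    using q symfun_F[OF q] unfolding symfun_def by metis
  define D where "D = max (max d d') j"
  then have "j \<le> D"
    by simp
  have dD: "\<And>e. q e \<noteq> 0 \<Longrightarrow> deg e \<le> D" and dD': "\<And>e. F q k e \<noteq> 0 \<Longrightarrow> deg e \<le> D"
    using d d' unfolding D_def by (meson le_trans max.cobounded1 max.cobounded2)+
  have "(\<Sum>i\<le>D. a ^ i * (F (Ey q i) k e - Ey (F q k) i e)) = 0" for a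
  proof -
    have "Ea a q = (\<lambda>e. \<Sum>i\<le>D. a ^ i * Ey q i e)"
      by (intro ext Ea_eq_sum_Ey[OF q dD])
    then have "F (Ea a q) k e = (\<Sum>i\<le>D. a ^ i * F (Ey q i) k e)"
      using F_sum[of "{..D}" "Ey q"] symfun_Ey[OF q] by simp
    moreover have "F (Ea a q) k e = (\<Sum>i\<le>D. a ^ i * Ey (F q k) i e)"
      using F_Ea[OF q] Ea_eq_sum_Ey[OF symfun_F[OF q] dD'] by simp
    ultimately show ?thesis
      by (simp add: right_diff_distrib sum_subtractf)
  qed
  then show "F (Ey q j) k e = Ey (F q k) j e"
    using coeff_eq_0_if_sum_powers_vanish[where c = "\<lambda>i. F (Ey q i) k e - Ey (F q k) i e"] \<open>j \<le> D\<close>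
    by fastforce
qed

lemma F_eq_at_if_eq_on_msym:
  assumes msym: "\<And>l. is_partition l \<Longrightarrow> F (msym l) k e = c * Ey (msym l) k e"
    and r: "symfun r"
  shows "F r k e = c * Ey r k e"
proof -
  obtain d where "\<And>e. r e \<noteq> 0 \<Longrightarrow> deg e \<le> d"
    using r unfolding symfun_def by blast
  then have r_eq: "r = (\<lambda>e. \<Sum>l \<in> {l. is_partition l \<and> psize l \<le> d}. r l * msym l e)"
    using symfun_eq_sum_msym[OF r] by blast
  have "F r k e = (\<Sum>l \<in> {l. is_partition l \<and> psize l \<le> d}. r l * F (msym l) k e)"
    by (subst r_eq, subst F_sum) (simp_all add: finite_partitions_psize_le symfun_msym)
  moreover have "Ey r k e = (\<Sum>l \<in> {l. is_partition l \<and> psize l \<le> d}. r l * Ey (msym l) k e)"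
    by (subst r_eq) (simp add: Ey_def)
  ultimately show ?thesis
    using msym by (simp add: sum_distrib_left mult.left_commute)
qed

lemma F_eq_scaled_Ey_if_eq_at_zero_vec:
  assumes at_zero: "\<And>r k. symfun r \<Longrightarrow> F r k zero_vec = c * Ey r k zero_vec"
    and q: "symfun q"
  shows "F q = (\<lambda>k e. c * Ey q k e)"
proof (intro ext)
  fix k e
  show "F q k e = c * Ey q k e"
  proof (cases "finite {i. e i \<noteq> 0}")
    case False
    then show ?thesis
      using symfun_F[OF q] symfun_Ey[OF q] unfolding symfun_def by auto
  next
    case True
    then obtain N where "\<And>i. N \<le> i \<Longrightarrow> e i = 0"
      using finite_support_bounded by blast
    then show ?thesis
      using q
    proof (induction N arbitrary: e q)
      case 0
      then have "e = zero_vec"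
        by auto
      then show ?case
        using at_zero[OF 0(2)] by simp
    next
      case (Suc N)
      define e' where "e' = e \<circ> Suc"
      have e: "e = case_nat (e 0) e'"
        by (auto simp: fun_eq_iff e'_def split: nat.split)
      have e'_bounded: "\<And>i. N \<le> i \<Longrightarrow> e' i = 0"
        using Suc.prems(1) by (simp add: e'_def)
      have "F q k e = F (Ey q (e 0)) k e'"
        using F_Ey[OF Suc.prems(2)] by (subst e) (simp add: Ey_def)
      also have "\<dots> = c * Ey (Ey q (e 0)) k e'"
        by (rule Suc.IH[OF e'_bounded symfun_Ey[OF Suc.prems(2)]])
      also have "\<dots> = c * Ey q k e"
        using Ey_commute[OF Suc.prems(2)] by (subst (2) e) (simp add: Ey_def)
      finally show ?case .
    qed
  qed
qed

text \<open>p of the conjugate of mu is b mu m_mu plus monomials strictly above mu in revlex order,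
  for which the claim holds by induction, so only the term of m_mu remains.\<close>

lemma F_msym_at_zero_vec:
  assumes full: "full_seq p" and F_p: "\<And>l. is_partition l \<Longrightarrow> F (p l) = dp_rhs p l"
    and "is_partition l"
  shows "F (msym l) k zero_vec = p zero_vec zero_vec * Ey (msym l) k zero_vec"
  using assms(3)
proof (induction l rule: measure_induct_rule[where f = "\<lambda>l. card (revlex_above l)"])
  case (less \<mu>)
  let ?\<Phi> = "\<lambda>\<nu>. F (msym \<nu>) k zero_vec - p zero_vec zero_vec * Ey (msym \<nu>) k zero_vec"
  let ?S = "insert \<mu> (revlex_above \<mu>)"
  have IH: "?\<Phi> \<nu> = 0" if "\<nu> \<in> revlex_above \<mu>" for \<nu>
    using less.IH revlex_above_psubset[OF that] psubset_card_mono[OF finite_revlex_above] that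
    by (simp add: revlex_above_def)
  define l where "l = conj_part \<mu>"
  have l: "is_partition l" "conj_part l = \<mu>"
    using less.prems partition_conj_part conj_part_conj_part by (simp_all add: l_def)
  then obtain b where b: "b \<mu> \<noteq> 0" "p l = (\<lambda>e. \<Sum>\<nu>\<in>?S. b \<nu> * msym \<nu> e)"
    using full_seq_expansion[OF full l(1)] unfolding l(2) by blast
  have "F (p l) k zero_vec = (\<Sum>\<nu>\<in>?S. b \<nu> * F (msym \<nu>) k zero_vec)"
    by (subst b(2), subst F_sum) (simp_all add: finite_revlex_above symfun_msym)
  moreover have "Ey (p l) k zero_vec = (\<Sum>\<nu>\<in>?S. b \<nu> * Ey (msym \<nu>) k zero_vec)"
    by (subst b(2)) (simp add: Ey_def)
  moreover have "F (p l) k zero_vec = p zero_vec zero_vec * Ey (p l) k zero_vec"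
    using F_p[OF l(1)] dp_rhs_at_zero_vec[OF full l(1)] by simp
  ultimately have "(\<Sum>\<nu>\<in>?S. b \<nu> * ?\<Phi> \<nu>) = 0"
    by (simp add: right_diff_distrib sum_subtractf sum_distrib_left mult.left_commute)
  also have "(\<Sum>\<nu>\<in>?S. b \<nu> * ?\<Phi> \<nu>) = b \<mu> * ?\<Phi> \<mu>"
    using IH finite_revlex_above revlex_irrefl by (simp add: revlex_above_def)
  finally show ?case
    using b(1) by simp
qed

end

theorem theorem3:
  fixes p :: "(nat \<Rightarrow> nat) \<Rightarrow> (nat \<Rightarrow> nat) \<Rightarrow> 'k::field_char_0"
    and F :: "((nat \<Rightarrow> nat) \<Rightarrow> 'k) \<Rightarrow> nat \<Rightarrow> (nat \<Rightarrow> nat) \<Rightarrow> 'k"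
  assumes full: "full_seq p"
    and F_range: "\<And>q. symfun q \<Longrightarrow> polysym (F q)"
    and F_add: "\<And>q r. symfun q \<Longrightarrow> symfun r \<Longrightarrow>
                  F (\<lambda>e. q e + r e) = (\<lambda>k e. F q k e + F r k e)"
    and F_smult: "\<And>c q. symfun q \<Longrightarrow> F (\<lambda>e. c * q e) = (\<lambda>k e. c * F q k e)"
    and F_shift_inv: "\<And>a q. symfun q \<Longrightarrow> F (Ea a q) = (\<lambda>k. Ea a (F q k))"
    and F_p: "\<And>l. is_partition l \<Longrightarrow> F (p l) = dp_rhs p l"
  shows "\<exists>c. c \<noteq> 0 \<and> (\<forall>q. symfun q \<longrightarrow> F q = (\<lambda>k e. c * Ey q k e))
             \<and> full_dps (\<lambda>l e. p l e / c)"
proof -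
  interpret shift_invariant_operator F
    using F_range F_add F_smult F_shift_inv by unfold_locales
  define c where "c = p zero_vec zero_vec"
  have "c \<noteq> 0"
    using full_seq_zero_vec_at_zero_vec_neq_0[OF full] by (simp add: c_def)
  have F_eq: "F q = (\<lambda>k e. c * Ey q k e)" if "symfun q" for q
    using F_eq_scaled_Ey_if_eq_at_zero_vec F_eq_at_if_eq_on_msym F_msym_at_zero_vec[OF full F_p] that
    unfolding c_def by blast
  have "full_dps (\<lambda>l e. p l e / c)"
    using full_dps_scaled[OF full \<open>c \<noteq> 0\<close>] F_p F_eq symfun_full_seq[OF full] by metis
  with \<open>c \<noteq> 0\<close> F_eq show ?thesis
    by blast
qed

end
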